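(* Let $k\ge s\ge1$, let $\tau_1,\dots,\tau_k\in[0,1]$ be distinct, let $\ell_j$ be the Lagrange polynomials of degree $k-1$ on these nodes, and consider the $k$-stage collocation Runge--Kutta method with Butcher matrix $\mathcal A=(\alpha_{ij})$, $\alpha_{ij}=\int_0^{\tau_i}\ell_j(\tau)\,\mathrm{d}\tau$, and weights $\omega_j=\int_0^1\ell_j(\tau)\,\mathrm{d}\tau$. Let $\Omega=\mathrm{diag}(\omega_1,\dots,\omega_k)$ and $\mathcal P_s\in\mathbb R^{k\times s}$ with $(\mathcal P_s)_{ij}=P_j(\tau_i)$. Provided that the quadrature formula $(\omega_i,\tau_i)_{i=1}^k$ is exact for polynomials of degree at least $2s-1$, the Runge--Kutta method with abscissae $\tau_1,\dots,\tau_k$, weights $\omega_1,\dots,\omega_k$ and Butcher matrix $A=\mathcal A\mathcal P_s\mathcal P_s^T\Omega$ is the method HBVM$(k,s)$ based at the abscissae $\{\tau_i\}$, i.e. $\mathcal A\mathcal P_s\mathcal P_s^T\Omega=\mathcal I_s\mathcal P_s^T\Omega$.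
   Context: $P_j(t)=\sqrt{2j-1}\,\hat P_{j-1}(t)$, with $\hat P_{j-1}$ the shifted Legendre polynomial of degree $j-1$ on $[0,1]$, so that $\{P_j\}$ is orthonormal on $[0,1]$. HBVM$(k,s)$ based at the abscissae $\{\tau_i\}$ is the Runge--Kutta method with abscissae $\tau_i$, weights $\omega_i$ and Butcher matrix $\mathcal I_s\mathcal P_s^T\Omega$, where $\mathcal I_s\in\mathbb R^{k\times s}$ has entries $(\mathcal I_s)_{ij}=\int_0^{\tau_i}P_j(x)\,\mathrm{d}x$. *)

theory Defs
  imports "HOL-Analysis.Analysis" "HOL-Computational_Algebra.Polynomial"
begin

text \<open>Shifted Legendre polynomial of degree n on [0,1] (normalised by value 1 at t = 1):
  hatP n t = sum_{i=0}^n (-1)^(n+i) (n choose i) ((n+i) choose i) t^i.\<close>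
definition shifted_legendre :: "nat \<Rightarrow> real \<Rightarrow> real" where
  "shifted_legendre n t =
     (\<Sum>i\<le>n. (-1) ^ (n + i) * real (n choose i) * real ((n + i) choose i) * t ^ i)"

text \<open>Orthonormal Legendre basis on [0,1]: P_j = sqrt(2j-1) hatP_{j-1}, j \<ge> 1.\<close>
definition legP :: "nat \<Rightarrow> real \<Rightarrow> real" where
  "legP j t = sqrt (2 * real j - 1) * shifted_legendre (j - 1) t"

definition lagrange :: "nat \<Rightarrow> (nat \<Rightarrow> real) \<Rightarrow> nat \<Rightarrow> real \<Rightarrow> real" where
  "lagrange k \<tau> j t = (\<Prod>m\<in>{1..k} - {j}. (t - \<tau> m) / (\<tau> j - \<tau> m))"

definition coll_A :: "nat \<Rightarrow> (nat \<Rightarrow> real) \<Rightarrow> nat \<Rightarrow> nat \<Rightarrow> real" where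
  "coll_A k \<tau> i j = integral {0..\<tau> i} (lagrange k \<tau> j)"

definition coll_w :: "nat \<Rightarrow> (nat \<Rightarrow> real) \<Rightarrow> nat \<Rightarrow> real" where
  "coll_w k \<tau> j = integral {0..1} (lagrange k \<tau> j)"

text \<open>Matrices are functions nat => nat => real, indices starting at 1.\<close>
definition Pmat :: "(nat \<Rightarrow> real) \<Rightarrow> nat \<Rightarrow> nat \<Rightarrow> real" where
  "Pmat \<tau> i j = legP j (\<tau> i)"

definition Imat :: "(nat \<Rightarrow> real) \<Rightarrow> nat \<Rightarrow> nat \<Rightarrow> real" where
  "Imat \<tau> i j = integral {0..\<tau> i} (legP j)"

definition Omega :: "nat \<Rightarrow> (nat \<Rightarrow> real) \<Rightarrow> nat \<Rightarrow> nat \<Rightarrow> real" where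
  "Omega k \<tau> i j = (if i = j then coll_w k \<tau> i else 0)"

definition mmul :: "nat \<Rightarrow> (nat \<Rightarrow> nat \<Rightarrow> real) \<Rightarrow> (nat \<Rightarrow> nat \<Rightarrow> real) \<Rightarrow> nat \<Rightarrow> nat \<Rightarrow> real" where
  "mmul n A B i j = (\<Sum>l=1..n. A i l * B l j)"

definition mtrans :: "(nat \<Rightarrow> nat \<Rightarrow> real) \<Rightarrow> nat \<Rightarrow> nat \<Rightarrow> real" where
  "mtrans A i j = A j i"

definition quad_exact :: "nat \<Rightarrow> (nat \<Rightarrow> real) \<Rightarrow> nat \<Rightarrow> bool" where
  "quad_exact k \<tau> d \<longleftrightarrow>
     (\<forall>p :: real poly. degree p \<le> d \<longrightarrow>
        (\<Sum>i=1..k. coll_w k \<tau> i * poly p (\<tau> i)) = integral {0..1} (poly p))"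

end

theory Submission
  imports Defs
begin

text \<open>The columns of \<open>\<P>\<^sub>s\<close> sample polynomials of degree at most \<open>s - 1 < k\<close>. On such
  polynomials the \<open>k\<close>-point Lagrange interpolant is exact, so the collocation matrix
  integrates them exactly: \<open>\<A> \<P>\<^sub>s = \<I>\<^sub>s\<close>. Multiplying on the right by \<open>\<P>\<^sub>s\<^sup>T \<Omega>\<close> gives the
  claim.\<close>

definition lagrange_poly :: "nat \<Rightarrow> (nat \<Rightarrow> real) \<Rightarrow> nat \<Rightarrow> real poly" where
  "lagrange_poly k \<tau> j = (\<Prod>m\<in>{1..k} - {j}. smult (1 / (\<tau> j - \<tau> m)) [:- \<tau> m, 1:])"

lemma poly_lagrange_poly: "poly (lagrange_poly k \<tau> j) = lagrange k \<tau> j"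
  unfolding lagrange_poly_def lagrange_def
  by (simp add: fun_eq_iff poly_prod diff_divide_distrib mult.commute)

lemma degree_lagrange_poly:
  assumes "j \<in> {1..k}"
  shows "degree (lagrange_poly k \<tau> j) < k"
proof -
  have "degree (lagrange_poly k \<tau> j)
      \<le> (\<Sum>m\<in>{1..k} - {j}. degree (smult (1 / (\<tau> j - \<tau> m)) [:- \<tau> m, 1:]))"
    unfolding lagrange_poly_def by (rule degree_prod_sum_le[unfolded comp_def]) simp
  also have "\<dots> \<le> (\<Sum>m\<in>{1..k} - {j}. 1)"
    by (rule sum_mono) simp
  also have "\<dots> < k"
    using assms by simp
  finally show ?thesis .
qed

lemma continuous_on_lagrange: "continuous_on S (lagrange k \<tau> j)"
  unfolding poly_lagrange_poly[symmetric] by (intro continuous_on_poly continuous_on_id)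

lemma lagrange_at_node:
  assumes "inj_on \<tau> {1..k}" and "i \<in> {1..k}" and "j \<in> {1..k}"
  shows "lagrange k \<tau> j (\<tau> i) = (if i = j then 1 else 0)"
proof (cases "i = j")
  case True
  have "(\<tau> j - \<tau> m) / (\<tau> j - \<tau> m) = 1" if "m \<in> {1..k} - {j}" for m
    using assms that by (auto dest: inj_onD)
  then show ?thesis
    using True unfolding lagrange_def by simp
next
  case False
  then have "i \<in> {1..k} - {j}"
    using assms(2) by simp
  then show ?thesis
    using False unfolding lagrange_def by (intro trans[OF prod_zero]) auto
qed

lemma lagrange_interpolation:
  fixes q :: "real poly"
  assumes "inj_on \<tau> {1..k}" and "degree q < k"
  shows "poly q t = (\<Sum>j=1..k. lagrange k \<tau> j t * poly q (\<tau> j))"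
proof -
  define r where "r = (\<Sum>j=1..k. smult (poly q (\<tau> j)) (lagrange_poly k \<tau> j))"
  have poly_r: "poly r t = (\<Sum>j=1..k. lagrange k \<tau> j t * poly q (\<tau> j))" for t
    unfolding r_def by (simp add: poly_sum poly_lagrange_poly mult.commute)
  have degree_r: "degree r < k"
    unfolding r_def
  proof (rule degree_sum_less)
    fix j assume "j \<in> {1..k}"
    then show "degree (smult (poly q (\<tau> j)) (lagrange_poly k \<tau> j)) < k"
      by (rule le_less_trans[OF degree_smult_le degree_lagrange_poly])
  qed (use assms(2) in simp)
  have card_nodes: "card (\<tau> ` {1..k}) = k"
    using assms(1) by (simp add: card_image)
  have "q = r"
  proof (rule poly_eqI_degree[where A = "\<tau> ` {1..k}"])
    fix x assume "x \<in> \<tau> ` {1..k}"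
    then obtain i where i: "i \<in> {1..k}" and x: "x = \<tau> i"
      by blast
    have "poly r x = (\<Sum>j=1..k. if i = j then poly q (\<tau> j) else 0)"
      unfolding poly_r x using lagrange_at_node[OF assms(1) i] by (intro sum.cong refl) simp
    also have "\<dots> = poly q x"
      using i x by simp
    finally show "poly q x = poly r x" ..
  qed (use assms(2) degree_r card_nodes in simp_all)
  then have "poly q t = poly r t"
    by simp
  also have "\<dots> = (\<Sum>j=1..k. lagrange k \<tau> j t * poly q (\<tau> j))"
    by (rule poly_r)
  finally show ?thesis .
qed

lemma collocation_integrates_exactly:
  fixes q :: "real poly"
  assumes "inj_on \<tau> {1..k}" and "degree q < k"
  shows "(\<Sum>j=1..k. coll_A k \<tau> i j * poly q (\<tau> j)) = integral {0..\<tau> i} (poly q)"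
proof -
  have "(\<Sum>j=1..k. coll_A k \<tau> i j * poly q (\<tau> j))
      = (\<Sum>j=1..k. integral {0..\<tau> i} (\<lambda>t. lagrange k \<tau> j t * poly q (\<tau> j)))"
    unfolding coll_A_def by simp
  also have "\<dots> = integral {0..\<tau> i} (\<lambda>t. \<Sum>j=1..k. lagrange k \<tau> j t * poly q (\<tau> j))"
    by (intro integral_sum[symmetric] integrable_continuous_interval
        continuous_on_mult_right continuous_on_lagrange) simp
  also have "\<dots> = integral {0..\<tau> i} (poly q)"
    using lagrange_interpolation[OF assms, symmetric] by simp
  finally show ?thesis .
qed

definition legendre_poly :: "nat \<Rightarrow> real poly" where
  "legendre_poly j = smult (sqrt (2 * real j - 1))
     (\<Sum>i\<le>j - 1. monom ((-1) ^ (j - 1 + i) * real (j - 1 choose i) * real ((j - 1 + i) choose i)) i)"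

lemma poly_legendre_poly: "poly (legendre_poly j) = legP j"
  unfolding legendre_poly_def legP_def shifted_legendre_def
  by (simp add: fun_eq_iff poly_sum poly_monom)

lemma degree_legendre_poly: "degree (legendre_poly j) \<le> j - 1"
  unfolding legendre_poly_def
  by (intro order.trans[OF degree_smult_le] degree_sum_le order.trans[OF degree_monom_le]) auto

lemma coll_A_mmul_Pmat:
  assumes "inj_on \<tau> {1..k}" and "j \<in> {1..k}"
  shows "mmul k (coll_A k \<tau>) (Pmat \<tau>) i j = Imat \<tau> i j"
proof -
  have "j - 1 < k"
    using assms(2) by auto
  with degree_legendre_poly have "degree (legendre_poly j) < k"
    by (rule le_less_trans)
  from collocation_integrates_exactly[OF assms(1) this, of i]
  show ?thesis
    unfolding mmul_def Pmat_def Imat_def poly_legendre_poly .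
qed

theorem theorem4p2:
  fixes k s :: nat and \<tau> :: "nat \<Rightarrow> real"
  assumes "1 \<le> s" and "s \<le> k"
    and "\<forall>i\<in>{1..k}. 0 \<le> \<tau> i \<and> \<tau> i \<le> 1"
    and "inj_on \<tau> {1..k}"
    and "quad_exact k \<tau> (2 * s - 1)"
  shows "\<forall>i\<in>{1..k}. \<forall>j\<in>{1..k}.
           mmul k (mmul s (mmul k (coll_A k \<tau>) (Pmat \<tau>)) (mtrans (Pmat \<tau>))) (Omega k \<tau>) i j
         = mmul k (mmul s (Imat \<tau>) (mtrans (Pmat \<tau>))) (Omega k \<tau>) i j"
proof -
  have "mmul s (mmul k (coll_A k \<tau>) (Pmat \<tau>)) (mtrans (Pmat \<tau>))
      = mmul s (Imat \<tau>) (mtrans (Pmat \<tau>))"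
    using coll_A_mmul_Pmat[OF assms(4)] assms(2)
    unfolding mmul_def[of s] by (intro ext sum.cong refl) auto
  then show ?thesis
    by simp
qed

end
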